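(* Let $M$ be a nonzero $\mathscr{D}(R,V)$-module such that $\pi M = (0)$. Then $\mathrm{Ann}_R(M) = \pi R$.
   Context: Let $(V, \pi V, k)$ be a DVR of mixed characteristic $(0,p)$ (i.e. $V$ has characteristic zero, maximal ideal generated by $\pi$, and residue field $k$ of characteristic $p>0$), and let $R$ be either $V[[x_1, \ldots, x_n]]$ or $V[x_1, \ldots, x_n]$ for some $n \geq 0$. $\mathscr{D}(R,V)$ denotes the ring of $V$-linear differential operators on $R$, and $\mathscr{D}(R,V)$-modules are left modules over it. *)

theory Defs
  imports Main "HOL-Computational_Algebra.Primes"
begin

text \<open>Elements of V[[x_0,...,x_{n-1}]] and V[x_0,...,x_{n-1}] are represented as
  coefficient functions on multi-indices (nat \<Rightarrow> nat) that vanish outside the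
  multi-indices supported in {0..<n}. V is the whole type 'v.\<close>

type_synonym 'v ser = "(nat \<Rightarrow> nat) \<Rightarrow> 'v"

definition multi_idx :: "nat \<Rightarrow> (nat \<Rightarrow> nat) set" where
  "multi_idx n = {\<alpha>. \<forall>i\<ge>n. \<alpha> i = 0}"

definition ps_carrier :: "nat \<Rightarrow> ('v::zero) ser set" where
  "ps_carrier n = {f. \<forall>\<alpha>. \<alpha> \<notin> multi_idx n \<longrightarrow> f \<alpha> = 0}"

definition poly_carrier :: "nat \<Rightarrow> ('v::zero) ser set" where
  "poly_carrier n = {f \<in> ps_carrier n. finite {\<alpha>. f \<alpha> \<noteq> 0}}"

definition ser_zero :: "('v::zero) ser" where
  "ser_zero = (\<lambda>\<alpha>. 0)"

definition ser_add :: "('v::plus) ser \<Rightarrow> 'v ser \<Rightarrow> 'v ser" where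
  "ser_add f g = (\<lambda>\<alpha>. f \<alpha> + g \<alpha>)"

definition ser_diff :: "('v::minus) ser \<Rightarrow> 'v ser \<Rightarrow> 'v ser" where
  "ser_diff f g = (\<lambda>\<alpha>. f \<alpha> - g \<alpha>)"

text \<open>Cauchy product (finite sum since multi-indices in the carrier have finite support).\<close>
definition ser_mult :: "('v::comm_ring_1) ser \<Rightarrow> 'v ser \<Rightarrow> 'v ser" where
  "ser_mult f g = (\<lambda>\<alpha>. \<Sum>\<beta>\<in>{\<beta>. \<beta> \<le> \<alpha>}. f \<beta> * g (\<lambda>i. \<alpha> i - \<beta> i))"

definition ser_const :: "('v::zero) \<Rightarrow> 'v ser" where
  "ser_const c = (\<lambda>\<alpha>. if \<alpha> = (\<lambda>i. 0) then c else 0)"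

text \<open>Operators on R are functions 'v ser \<Rightarrow> 'v ser, normalised to be 0 off the carrier.\<close>
definition extensional_op :: "('v::zero) ser set \<Rightarrow> ('v ser \<Rightarrow> 'v ser) \<Rightarrow> bool" where
  "extensional_op Rc \<delta> \<longleftrightarrow> (\<forall>f. f \<notin> Rc \<longrightarrow> \<delta> f = ser_zero)"

definition V_linear_op :: "('v::comm_ring_1) ser set \<Rightarrow> ('v ser \<Rightarrow> 'v ser) \<Rightarrow> bool" where
  "V_linear_op Rc \<delta> \<longleftrightarrow> extensional_op Rc \<delta> \<and> (\<forall>f\<in>Rc. \<delta> f \<in> Rc)
     \<and> (\<forall>f\<in>Rc. \<forall>g\<in>Rc. \<delta> (ser_add f g) = ser_add (\<delta> f) (\<delta> g))
     \<and> (\<forall>c. \<forall>f\<in>Rc. \<delta> (ser_mult (ser_const c) f) = ser_mult (ser_const c) (\<delta> f))"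

definition mult_op :: "('v::comm_ring_1) ser set \<Rightarrow> 'v ser \<Rightarrow> ('v ser \<Rightarrow> 'v ser)" where
  "mult_op Rc r = (\<lambda>f. if f \<in> Rc then ser_mult r f else ser_zero)"

text \<open>Grothendieck's V-linear differential operators of order \<le> k:
  D^0 = R-linear endomorphisms; D^{k+1} = V-linear \<delta> with [\<delta>, r] \<in> D^k for all r \<in> R.\<close>
fun diff_op :: "('v::comm_ring_1) ser set \<Rightarrow> nat \<Rightarrow> ('v ser \<Rightarrow> 'v ser) \<Rightarrow> bool" where
  "diff_op Rc 0 \<delta> \<longleftrightarrow> V_linear_op Rc \<delta> \<and>
      (\<forall>r\<in>Rc. \<forall>f\<in>Rc. \<delta> (ser_mult r f) = ser_mult r (\<delta> f))"
| "diff_op Rc (Suc k) \<delta> \<longleftrightarrow> V_linear_op Rc \<delta> \<and>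
      (\<forall>r\<in>Rc. diff_op Rc k
          (\<lambda>f. if f \<in> Rc then ser_diff (\<delta> (ser_mult r f)) (ser_mult r (\<delta> f)) else ser_zero))"

definition diff_ops :: "('v::comm_ring_1) ser set \<Rightarrow> ('v ser \<Rightarrow> 'v ser) set" where
  "diff_ops Rc = {\<delta>. \<exists>k. diff_op Rc k \<delta>}"

definition D_module :: "('v::comm_ring_1) ser set \<Rightarrow> (('v ser \<Rightarrow> 'v ser) \<Rightarrow> 'm::ab_group_add \<Rightarrow> 'm) \<Rightarrow> bool" where
  "D_module Rc act \<longleftrightarrow>
     (\<forall>\<delta>\<in>diff_ops Rc. \<forall>m m'. act \<delta> (m + m') = act \<delta> m + act \<delta> m')
   \<and> (\<forall>\<delta>\<in>diff_ops Rc. \<forall>\<delta>'\<in>diff_ops Rc. \<forall>m.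
        act (\<lambda>f. ser_add (\<delta> f) (\<delta>' f)) m = act \<delta> m + act \<delta>' m)
   \<and> (\<forall>\<delta>\<in>diff_ops Rc. \<forall>\<delta>'\<in>diff_ops Rc. \<forall>m. act (\<delta> \<circ> \<delta>') m = act \<delta> (act \<delta>' m))
   \<and> (\<forall>m. act (\<lambda>f. if f \<in> Rc then f else ser_zero) m = m)"

text \<open>Ann_R(M), with R acting through multiplication operators.\<close>
definition ann_R :: "('v::comm_ring_1) ser set \<Rightarrow> (('v ser \<Rightarrow> 'v ser) \<Rightarrow> 'm::ab_group_add \<Rightarrow> 'm) \<Rightarrow> 'v ser set" where
  "ann_R Rc act = {r \<in> Rc. \<forall>m. act (mult_op Rc r) m = 0}"

definition DVR_uniformizer :: "'v::idom \<Rightarrow> bool" where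
  "DVR_uniformizer \<pi> \<longleftrightarrow> \<pi> \<noteq> 0 \<and> \<not> \<pi> dvd 1 \<and>
     (\<forall>a. a \<noteq> 0 \<longrightarrow> (\<exists>u k. u dvd 1 \<and> a = u * \<pi> ^ k))"

end

theory Submission
  imports Defs
begin

text \<open>The annihilator \<open>J = Ann\<^sub>R(M)\<close> is an ideal containing \<open>\<pi>\<close>, and it is stable under the
  Hasse derivatives \<open>\<partial>\<^sub>i\<^bsup>[k]\<^esup> = (1/k!) \<partial>\<^sup>k/\<partial>x\<^sub>i\<^sup>k\<close>, which are differential operators of order
  \<open>k\<close> defined over \<open>V\<close>: applying \<open>\<partial>\<^sub>i\<^bsup>[k]\<^esup>\<close> to \<open>r m = 0\<close> and expanding by the Leibniz rule
  gives \<open>\<partial>\<^sub>i\<^bsup>[k]\<^esup>(r) m = 0\<close> by induction on \<open>k\<close>. If some \<open>r \<in> J\<close> had a coefficient \<open>r\<^sub>\<alpha>\<close> not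
  divisible by \<open>\<pi>\<close>, i.e. a unit of \<open>V\<close>, then \<open>\<partial>\<^bsup>[\<alpha>]\<^esup> r \<in> J\<close> would have constant term \<open>r\<^sub>\<alpha>\<close>.
  For power series this makes \<open>\<partial>\<^bsup>[\<alpha>]\<^esup> r\<close> a unit of \<open>R\<close>; for polynomials, choosing such an \<open>\<alpha>\<close>
  of maximal total degree, \<open>\<partial>\<^bsup>[\<alpha>]\<^esup> r \<equiv> r\<^sub>\<alpha>\<close> modulo \<open>\<pi>R \<subseteq> J\<close>. Either way \<open>J\<close> contains a unit
  and \<open>M = 0\<close>. Hence \<open>J \<subseteq> \<pi>R\<close>, and \<open>\<pi>R \<subseteq> J\<close> is the hypothesis \<open>\<pi>M = 0\<close>.\<close>

section \<open>Multi-indices and series\<close>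

lemma multi_idx_le: "\<alpha> \<in> multi_idx n \<Longrightarrow> \<beta> \<le> \<alpha> \<Longrightarrow> \<beta> \<in> multi_idx n"
  unfolding multi_idx_def le_fun_def by (simp, metis le_0_eq)

lemma multi_idx_diff: "\<alpha> \<in> multi_idx n \<Longrightarrow> (\<lambda>i. \<alpha> i - \<beta> i) \<in> multi_idx n"
  unfolding multi_idx_def by simp

lemma multi_idx_add: "\<alpha> \<in> multi_idx n \<Longrightarrow> \<beta> \<in> multi_idx n \<Longrightarrow> (\<lambda>i. \<alpha> i + \<beta> i) \<in> multi_idx n"
  unfolding multi_idx_def by simp

lemma multi_idx_upd: "\<alpha> \<in> multi_idx n \<Longrightarrow> i < n \<Longrightarrow> \<alpha>(i := k) \<in> multi_idx n"
  unfolding multi_idx_def by simp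

lemma zero_in_multi_idx: "(\<lambda>i. 0) \<in> multi_idx n"
  unfolding multi_idx_def by simp

lemma finite_le_multi_idx:
  assumes "\<alpha> \<in> multi_idx n"
  shows "finite {\<beta>. \<beta> \<le> \<alpha>}"
proof -
  let ?B = "{..\<Sum>j<n. \<alpha> j}"
  have "{\<beta>. \<beta> \<le> \<alpha>} \<subseteq> {\<beta>. \<forall>i. (i \<in> {..<n} \<longrightarrow> \<beta> i \<in> ?B) \<and> (i \<notin> {..<n} \<longrightarrow> \<beta> i = 0)}"
  proof (intro subsetI CollectI allI conjI impI)
    fix \<beta> i assume "\<beta> \<in> {\<beta>. \<beta> \<le> \<alpha>}"
    then have le: "\<beta> i \<le> \<alpha> i" by (simp add: le_fun_def)
    show "\<beta> i \<in> ?B" if "i \<in> {..<n}"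
      using le member_le_sum[of i "{..<n}" \<alpha>] that by simp
    show "\<beta> i = 0" if "i \<notin> {..<n}"
      using le assms that by (simp add: multi_idx_def)
  qed
  moreover have "finite {\<beta>. \<forall>i. (i \<in> {..<n} \<longrightarrow> \<beta> i \<in> ?B) \<and> (i \<notin> {..<n} \<longrightarrow> \<beta> i = 0)}"
    by (rule finite_set_of_finite_funs) auto
  ultimately show ?thesis by (rule finite_subset)
qed

lemma ps_carrier_eqI:
  assumes "f \<in> ps_carrier n" "g \<in> ps_carrier n" "\<And>\<alpha>. \<alpha> \<in> multi_idx n \<Longrightarrow> f \<alpha> = g \<alpha>"
  shows "f = g"
proof
  fix \<alpha> show "f \<alpha> = g \<alpha>"
    using assms by (cases "\<alpha> \<in> multi_idx n") (auto simp: ps_carrier_def)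
qed

definition ser_scale :: "'v::comm_ring_1 \<Rightarrow> 'v ser \<Rightarrow> 'v ser" where
  "ser_scale c f = (\<lambda>\<alpha>. c * f \<alpha>)"

lemma ser_mult_const_at:
  fixes f :: "'v::comm_ring_1 ser"
  assumes "\<alpha> \<in> multi_idx n"
  shows "ser_mult (ser_const c) f \<alpha> = c * f \<alpha>"
proof -
  have "ser_mult (ser_const c) f \<alpha> = (\<Sum>\<beta>\<in>{\<beta>. \<beta> \<le> \<alpha>}. if \<beta> = (\<lambda>i. 0) then c * f \<alpha> else 0)"
    unfolding ser_mult_def ser_const_def by (intro sum.cong) auto
  also have "\<dots> = c * f \<alpha>"
    using finite_le_multi_idx[OF assms] by (simp add: le_fun_def)
  finally show ?thesis .
qed

lemma ser_mult_const:
  fixes f :: "'v::comm_ring_1 ser"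
  assumes "f \<in> ps_carrier n"
  shows "ser_mult (ser_const c) f = ser_scale c f"
proof
  fix \<alpha> show "ser_mult (ser_const c) f \<alpha> = ser_scale c f \<alpha>"
  proof (cases "\<alpha> \<in> multi_idx n")
    case True
    then show ?thesis by (simp add: ser_mult_const_at ser_scale_def)
  next
    case False
    then have "f \<alpha> = 0" using assms by (simp add: ps_carrier_def)
    moreover have "ser_mult (ser_const c) f \<alpha> = 0"
      unfolding ser_mult_def ser_const_def by (rule sum.neutral) (auto simp: \<open>f \<alpha> = 0\<close>)
    ultimately show ?thesis by (simp add: ser_scale_def)
  qed
qed

lemma ser_mult_zero_right: "ser_mult f ser_zero = (ser_zero :: 'v::comm_ring_1 ser)"
  unfolding ser_mult_def ser_zero_def by simp

lemma ser_mult_add_right: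
  "ser_mult f (ser_add g h) = ser_add (ser_mult f g) (ser_mult f h :: 'v::comm_ring_1 ser)"
  unfolding ser_mult_def ser_add_def by (simp add: distrib_left sum.distrib)

lemma ser_mult_add_left:
  "ser_mult (ser_add f g) h = ser_add (ser_mult f h) (ser_mult g h :: 'v::comm_ring_1 ser)"
  unfolding ser_mult_def ser_add_def by (simp add: distrib_right sum.distrib)

lemma ser_mult_diff_right:
  "ser_mult f (ser_diff g h) = ser_diff (ser_mult f g) (ser_mult f h :: 'v::comm_ring_1 ser)"
  unfolding ser_mult_def ser_diff_def by (simp add: right_diff_distrib sum_subtractf)

lemma ser_mult_scale_right:
  "ser_mult f (ser_scale c g) = ser_scale c (ser_mult f g :: 'v::comm_ring_1 ser)"
  unfolding ser_mult_def ser_scale_def by (simp add: sum_distrib_left mult_ac)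

lemma ser_mult_commute: "ser_mult f g = ser_mult g (f :: 'v::comm_ring_1 ser)"
proof
  fix \<alpha>
  show "ser_mult f g \<alpha> = ser_mult g f \<alpha>"
    unfolding ser_mult_def
    by (rule sum.reindex_bij_witness[of _ "\<lambda>\<beta> i. \<alpha> i - \<beta> i" "\<lambda>\<beta> i. \<alpha> i - \<beta> i"])
       (auto simp: le_fun_def fun_eq_iff mult.commute)
qed

lemma bij_betw_le_pairs:
  fixes \<alpha> :: "nat \<Rightarrow> nat"
  shows "bij_betw (\<lambda>(\<beta>, \<gamma>). (\<gamma>, \<lambda>i. \<beta> i - \<gamma> i))
    (SIGMA \<beta>:{\<beta>. \<beta> \<le> \<alpha>}. {\<gamma>. \<gamma> \<le> \<beta>}) (SIGMA \<gamma>:{\<gamma>. \<gamma> \<le> \<alpha>}. {\<delta>. \<delta> \<le> (\<lambda>i. \<alpha> i - \<gamma> i)})"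
  by (rule bij_betw_byWitness[where f' = "\<lambda>(\<gamma>, \<delta>). (\<lambda>i. \<gamma> i + \<delta> i, \<gamma>)"])
    (auto simp: le_fun_def fun_eq_iff intro: diff_le_mono order.trans, (metis add.commute le_diff_conv2)+)

lemma ser_mult_assoc_at:
  fixes f g h :: "'v::comm_ring_1 ser"
  assumes \<alpha>: "\<alpha> \<in> multi_idx n"
  shows "ser_mult (ser_mult f g) h \<alpha> = ser_mult f (ser_mult g h) \<alpha>"
proof -
  let ?A = "SIGMA \<beta>:{\<beta>. \<beta> \<le> \<alpha>}. {\<gamma>. \<gamma> \<le> \<beta>}"
  let ?B = "SIGMA \<gamma>:{\<gamma>. \<gamma> \<le> \<alpha>}. {\<delta>. \<delta> \<le> (\<lambda>i. \<alpha> i - \<gamma> i)}"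
  have fin: "finite {\<beta>. \<beta> \<le> \<alpha>}" "\<And>\<beta>. \<beta> \<le> \<alpha> \<Longrightarrow> finite {\<gamma>. \<gamma> \<le> \<beta>}"
    "\<And>\<gamma>. finite {\<delta>. \<delta> \<le> (\<lambda>i. \<alpha> i - \<gamma> i)}"
    using finite_le_multi_idx multi_idx_le multi_idx_diff \<alpha> by blast+
  have "ser_mult (ser_mult f g) h \<alpha> =
      (\<Sum>(\<beta>, \<gamma>)\<in>?A. f \<gamma> * (g (\<lambda>i. \<beta> i - \<gamma> i) * h (\<lambda>i. \<alpha> i - \<gamma> i - (\<beta> i - \<gamma> i))))"
    unfolding ser_mult_def sum_distrib_right using fin
    by (subst sum.Sigma) (auto simp: le_fun_def mult.assoc intro!: sum.cong arg_cong[where f = h])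
  also have "\<dots> = (\<Sum>(\<gamma>, \<delta>)\<in>?B. f \<gamma> * (g \<delta> * h (\<lambda>i. \<alpha> i - \<gamma> i - \<delta> i)))"
    using sum.reindex_bij_betw[OF bij_betw_le_pairs, of "\<lambda>(\<gamma>, \<delta>). f \<gamma> * (g \<delta> * h (\<lambda>i. \<alpha> i - \<gamma> i - \<delta> i))"]
    by (simp add: case_prod_beta')
  also have "\<dots> = ser_mult f (ser_mult g h) \<alpha>"
    unfolding ser_mult_def sum_distrib_left using fin by (subst sum.Sigma) auto
  finally show ?thesis .
qed

lemma ser_mult_ps_carrier:
  fixes f g :: "'v::comm_ring_1 ser"
  assumes f: "f \<in> ps_carrier n" and g: "g \<in> ps_carrier n"
  shows "ser_mult f g \<in> ps_carrier n"
  unfolding ps_carrier_def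
proof (intro CollectI allI impI)
  fix \<alpha> assume \<alpha>: "\<alpha> \<notin> multi_idx n"
  have "f \<beta> * g (\<lambda>i. \<alpha> i - \<beta> i) = 0" for \<beta>
  proof (cases "\<beta> \<in> multi_idx n")
    case True
    then have "(\<lambda>i. \<alpha> i - \<beta> i) \<notin> multi_idx n"
      using \<alpha> unfolding multi_idx_def by auto
    then show ?thesis using g by (simp add: ps_carrier_def)
  next
    case False
    then show ?thesis using f by (simp add: ps_carrier_def)
  qed
  then show "ser_mult f g \<alpha> = 0" by (simp add: ser_mult_def)
qed

lemma finite_support_ser_mult:
  fixes f g :: "'v::comm_ring_1 ser"
  assumes "finite {\<alpha>. f \<alpha> \<noteq> 0}" "finite {\<alpha>. g \<alpha> \<noteq> 0}"
  shows "finite {\<alpha>. ser_mult f g \<alpha> \<noteq> 0}"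
proof (rule finite_subset)
  let ?S = "(\<lambda>(\<beta>, \<gamma>). (\<lambda>i::nat. \<beta> i + \<gamma> i)) ` ({\<beta>. f \<beta> \<noteq> 0} \<times> {\<gamma>. g \<gamma> \<noteq> 0})"
  show "finite ?S" using assms by simp
  show "{\<alpha>. ser_mult f g \<alpha> \<noteq> 0} \<subseteq> ?S"
  proof
    fix \<alpha> assume "\<alpha> \<in> {\<alpha>. ser_mult f g \<alpha> \<noteq> 0}"
    then have "(\<Sum>\<beta>\<in>{\<beta>. \<beta> \<le> \<alpha>}. f \<beta> * g (\<lambda>i. \<alpha> i - \<beta> i)) \<noteq> 0"
      by (simp add: ser_mult_def)
    then obtain \<beta> where \<beta>: "\<beta> \<le> \<alpha>" "f \<beta> * g (\<lambda>i. \<alpha> i - \<beta> i) \<noteq> 0"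
      using sum.not_neutral_contains_not_neutral by blast
    have "\<alpha> = (\<lambda>i. \<beta> i + (\<alpha> i - \<beta> i))" using \<beta>(1) by (auto simp: le_fun_def)
    then show "\<alpha> \<in> ?S"
      using \<beta>(2) by (intro image_eqI[where x="(\<beta>, \<lambda>i. \<alpha> i - \<beta> i)"]) auto
  qed
qed

lemma ser_mult_assoc:
  fixes f g h :: "'v::comm_ring_1 ser"
  assumes "f \<in> ps_carrier n" "g \<in> ps_carrier n" "h \<in> ps_carrier n"
  shows "ser_mult (ser_mult f g) h = ser_mult f (ser_mult g h)"
  using assms by (intro ps_carrier_eqI[of _ n] ser_mult_ps_carrier ser_mult_assoc_at)

lemma ser_mult_left_commute:
  fixes f g h :: "'v::comm_ring_1 ser"
  assumes "f \<in> ps_carrier n" "g \<in> ps_carrier n" "h \<in> ps_carrier n"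
  shows "ser_mult f (ser_mult g h) = ser_mult g (ser_mult f h)"
  using ser_mult_assoc[OF assms] ser_mult_assoc[OF assms(2,1,3)] ser_mult_commute[of f g]
  by simp

section \<open>Inverting power series\<close>

definition total_deg :: "nat \<Rightarrow> (nat \<Rightarrow> nat) \<Rightarrow> nat" where
  "total_deg n \<alpha> = (\<Sum>i<n. \<alpha> i)"

lemma total_deg_add: "total_deg n (\<lambda>i. \<alpha> i + \<beta> i) = total_deg n \<alpha> + total_deg n \<beta>"
  by (simp add: total_deg_def sum.distrib)

lemma total_deg_pos:
  assumes "\<alpha> \<in> multi_idx n" "\<alpha> \<noteq> (\<lambda>i. 0)"
  shows "0 < total_deg n \<alpha>"
proof -
  obtain j where j: "\<alpha> j \<noteq> 0" using assms(2) by auto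
  then have "j < n" using assms(1) by (auto simp: multi_idx_def not_less[symmetric])
  then have "\<alpha> j \<le> total_deg n \<alpha>" unfolding total_deg_def by (intro member_le_sum) auto
  then show ?thesis using j by simp
qed

lemma total_deg_diff_less:
  assumes "\<alpha> \<in> multi_idx n" "\<beta> \<le> \<alpha>" "\<beta> \<noteq> (\<lambda>i. 0)"
  shows "total_deg n (\<lambda>i. \<alpha> i - \<beta> i) < total_deg n \<alpha>"
proof -
  have "\<alpha> = (\<lambda>i. (\<alpha> i - \<beta> i) + \<beta> i)" using assms(2) by (auto simp: le_fun_def fun_eq_iff)
  then have "total_deg n \<alpha> = total_deg n (\<lambda>i. \<alpha> i - \<beta> i) + total_deg n \<beta>"
    by (metis total_deg_add)
  then show ?thesis using total_deg_pos[OF multi_idx_le[OF assms(1,2)] assms(3)] by simp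
qed

text \<open>Write \<open>s = s\<^sub>0 + t\<close> with \<open>t\<close> of zero constant term and \<open>c s\<^sub>0 = 1\<close>. The inverse \<open>v\<close> of \<open>s\<close>
  is the fixed point of \<open>v = c (1 - t v)\<close>; the \<open>N\<close>-th iterate from \<open>0\<close> has the right coefficients
  in total degree \<open>< N\<close>.\<close>
primrec inverse_approx :: "nat \<Rightarrow> 'v::comm_ring_1 ser \<Rightarrow> 'v \<Rightarrow> nat \<Rightarrow> 'v ser" where
  "inverse_approx n t c 0 = ser_zero"
| "inverse_approx n t c (Suc N) =
    (\<lambda>\<alpha>. if \<alpha> \<in> multi_idx n then c * (ser_const 1 \<alpha> - ser_mult t (inverse_approx n t c N) \<alpha>) else 0)"

definition ps_inverse :: "nat \<Rightarrow> 'v::comm_ring_1 ser \<Rightarrow> 'v \<Rightarrow> 'v ser" where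
  "ps_inverse n t c \<alpha> = inverse_approx n t c (Suc (total_deg n \<alpha>)) \<alpha>"

lemma inverse_approx_Suc_stable:
  assumes t0: "t (\<lambda>i. 0) = 0"
  shows "\<alpha> \<in> multi_idx n \<Longrightarrow> total_deg n \<alpha> < N \<Longrightarrow>
    inverse_approx n t c (Suc N) \<alpha> = inverse_approx n t c N \<alpha>"
proof (induction N arbitrary: \<alpha>)
  case 0
  then show ?case by simp
next
  case (Suc N)
  have "t \<beta> * inverse_approx n t c (Suc N) (\<lambda>i. \<alpha> i - \<beta> i) = t \<beta> * inverse_approx n t c N (\<lambda>i. \<alpha> i - \<beta> i)"
    if "\<beta> \<le> \<alpha>" for \<beta>
  proof (cases "\<beta> = (\<lambda>i. 0)")
    case False
    then have "total_deg n (\<lambda>i. \<alpha> i - \<beta> i) < N"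
      using total_deg_diff_less[OF Suc.prems(1) that] Suc.prems(2) by simp
    then show ?thesis using Suc.IH multi_idx_diff[OF Suc.prems(1)] by simp
  qed (simp add: t0)
  then show ?case by (simp add: ser_mult_def)
qed

lemma inverse_approx_stable:
  assumes "t (\<lambda>i. 0) = 0" "\<alpha> \<in> multi_idx n" "total_deg n \<alpha> < N" "N \<le> N'"
  shows "inverse_approx n t c N' \<alpha> = inverse_approx n t c N \<alpha>"
  using assms(4)
proof (induction N' rule: dec_induct)
  case (step N')
  then show ?case using inverse_approx_Suc_stable[where t = t, OF assms(1,2)] assms(3) by simp
qed simp

lemma ps_inverse_fixpoint:
  assumes t0: "t (\<lambda>i. 0) = 0" and \<alpha>: "\<alpha> \<in> multi_idx n"
  shows "ps_inverse n t c \<alpha> = c * (ser_const 1 \<alpha> - ser_mult t (ps_inverse n t c) \<alpha>)"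
proof -
  have "ser_mult t (ps_inverse n t c) \<alpha> = ser_mult t (inverse_approx n t c (total_deg n \<alpha>)) \<alpha>"
    unfolding ser_mult_def
  proof (rule sum.cong[OF refl])
    fix \<beta> assume "\<beta> \<in> {\<beta>. \<beta> \<le> \<alpha>}"
    then have \<beta>: "\<beta> \<le> \<alpha>" by simp
    show "t \<beta> * ps_inverse n t c (\<lambda>i. \<alpha> i - \<beta> i) = t \<beta> * inverse_approx n t c (total_deg n \<alpha>) (\<lambda>i. \<alpha> i - \<beta> i)"
    proof (cases "\<beta> = (\<lambda>i. 0)")
      case False
      then have "total_deg n (\<lambda>i. \<alpha> i - \<beta> i) < total_deg n \<alpha>"
        by (rule total_deg_diff_less[OF \<alpha> \<beta>])
      then have "inverse_approx n t c (total_deg n \<alpha>) (\<lambda>i. \<alpha> i - \<beta> i) = ps_inverse n t c (\<lambda>i. \<alpha> i - \<beta> i)"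
        unfolding ps_inverse_def by (intro inverse_approx_stable[where t = t, OF t0 multi_idx_diff[OF \<alpha>]]) auto
      then show ?thesis by simp
    qed (simp add: t0)
  qed
  then show ?thesis using \<alpha> unfolding ps_inverse_def[of n t c \<alpha>] by simp
qed

lemma ps_carrier_inverse:
  fixes s :: "'v::comm_ring_1 ser"
  assumes s: "s \<in> ps_carrier n" and c: "s (\<lambda>i. 0) * c = 1"
  shows "\<exists>v\<in>ps_carrier n. ser_mult s v = ser_const 1"
proof -
  define t where "t = s((\<lambda>i. 0) := 0)"
  define v where "v = ps_inverse n t c"
  have t0: "t (\<lambda>i. 0) = 0" by (simp add: t_def)
  have v: "v \<in> ps_carrier n" by (simp add: ps_carrier_def v_def ps_inverse_def)
  have s_split: "s = ser_add (ser_const (s (\<lambda>i. 0))) t"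
  proof
    fix \<alpha> show "s \<alpha> = ser_add (ser_const (s (\<lambda>i. 0))) t \<alpha>"
      by (cases "\<alpha> = (\<lambda>i. 0)") (simp_all add: ser_add_def ser_const_def t_def)
  qed
  have "ser_mult s v \<alpha> = ser_const 1 \<alpha>" if \<alpha>: "\<alpha> \<in> multi_idx n" for \<alpha>
  proof -
    have "ser_mult s v = ser_add (ser_mult (ser_const (s (\<lambda>i. 0))) v) (ser_mult t v)"
      by (subst s_split) (rule ser_mult_add_left)
    then have "ser_mult s v \<alpha> = s (\<lambda>i. 0) * v \<alpha> + ser_mult t v \<alpha>"
      by (simp add: ser_add_def ser_mult_const_at[OF \<alpha>])
    also have "\<dots> = (s (\<lambda>i. 0) * c) * (ser_const 1 \<alpha> - ser_mult t v \<alpha>) + ser_mult t v \<alpha>"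
      unfolding v_def by (subst ps_inverse_fixpoint[where t = t, OF t0 \<alpha>]) (simp add: mult.assoc)
    finally show ?thesis using c by simp
  qed
  then have "ser_mult s v = ser_const 1"
    using s v by (intro ps_carrier_eqI[of _ n] ser_mult_ps_carrier)
      (auto simp: ps_carrier_def ser_const_def zero_in_multi_idx)
  then show ?thesis using v by blast
qed

section \<open>Hasse derivatives\<close>

text \<open>The Hasse derivative \<open>\<partial>\<^sub>i\<^bsup>[k]\<^esup> = (1/k!) \<partial>\<^sup>k/\<partial>x\<^sub>i\<^sup>k\<close> sends
  \<open>x\<^sup>\<alpha>\<close> to \<open>(\<alpha>\<^sub>i choose k) x\<^bsup>\<alpha> - k e\<^sub>i\<^esup>\<close>; it is defined over any base ring.\<close>
definition hasse_deriv :: "nat \<Rightarrow> nat \<Rightarrow> 'v::comm_ring_1 ser \<Rightarrow> 'v ser" where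
  "hasse_deriv i k f = (\<lambda>\<alpha>. of_nat ((\<alpha> i + k) choose k) * f (\<alpha>(i := \<alpha> i + k)))"

lemma hasse_deriv_add: "hasse_deriv i k (ser_add f g) = ser_add (hasse_deriv i k f) (hasse_deriv i k g)"
  by (simp add: hasse_deriv_def ser_add_def fun_eq_iff distrib_left)

lemma hasse_deriv_scale: "hasse_deriv i k (ser_scale c f) = ser_scale c (hasse_deriv i k f)"
  by (simp add: hasse_deriv_def ser_scale_def fun_eq_iff mult_ac)

lemma hasse_deriv_zero: "hasse_deriv i k ser_zero = ser_zero"
  by (simp add: hasse_deriv_def ser_zero_def fun_eq_iff)

lemma inj_shift_idx: "inj (\<lambda>\<alpha>::nat \<Rightarrow> nat. \<alpha>(i := \<alpha> i + k))"
proof (rule injI)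
  fix \<alpha> \<beta> :: "nat \<Rightarrow> nat"
  assume eq: "\<alpha>(i := \<alpha> i + k) = \<beta>(i := \<beta> i + k)"
  show "\<alpha> = \<beta>"
  proof
    fix l show "\<alpha> l = \<beta> l" using fun_cong[OF eq, of l] by (cases "l = i") auto
  qed
qed

lemma hasse_deriv_ps_carrier:
  assumes "i < n" "f \<in> ps_carrier n"
  shows "hasse_deriv i k f \<in> ps_carrier n"
proof -
  have "\<alpha>(i := \<alpha> i + k) \<notin> multi_idx n" if "\<alpha> \<notin> multi_idx n" for \<alpha>
    using that assms(1) unfolding multi_idx_def by (auto split: if_splits)
  then show ?thesis using assms(2) by (simp add: ps_carrier_def hasse_deriv_def)
qed

lemma finite_support_hasse_deriv:
  assumes "finite {\<alpha>. f \<alpha> \<noteq> 0}"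
  shows "finite {\<alpha>. hasse_deriv i k f \<alpha> \<noteq> 0}"
proof (rule finite_subset)
  show "{\<alpha>. hasse_deriv i k f \<alpha> \<noteq> 0} \<subseteq> (\<lambda>\<alpha>. \<alpha>(i := \<alpha> i + k)) -` {\<beta>. f \<beta> \<noteq> 0}"
    by (auto simp: hasse_deriv_def)
  show "finite ((\<lambda>\<alpha>. \<alpha>(i := \<alpha> i + k)) -` {\<beta>. f \<beta> \<noteq> 0})"
    using assms inj_shift_idx by (intro finite_vimageI)
qed

lemma sum_le_shift_idx:
  fixes Y :: "(nat \<Rightarrow> nat) \<Rightarrow> 'a::comm_monoid_add"
  assumes \<alpha>: "\<alpha> \<in> multi_idx n" and i: "i < n" and jk: "j \<le> k"
    and vanish: "\<And>\<beta>. \<beta> \<le> \<alpha>(i := \<alpha> i + k) \<Longrightarrow> \<beta> i < j \<or> \<alpha> i + j < \<beta> i \<Longrightarrow> Y \<beta> = 0"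
  shows "(\<Sum>\<delta>\<in>{\<delta>. \<delta> \<le> \<alpha>}. Y (\<delta>(i := \<delta> i + j))) = (\<Sum>\<beta>\<in>{\<beta>. \<beta> \<le> \<alpha>(i := \<alpha> i + k)}. Y \<beta>)"
proof -
  let ?shift = "\<lambda>\<delta>::nat \<Rightarrow> nat. \<delta>(i := \<delta> i + j)"
  have "(\<Sum>\<delta>\<in>{\<delta>. \<delta> \<le> \<alpha>}. Y (?shift \<delta>)) = (\<Sum>\<beta>\<in>?shift ` {\<delta>. \<delta> \<le> \<alpha>}. Y \<beta>)"
    using inj_shift_idx by (intro sum.reindex[symmetric, unfolded comp_def]) (blast intro: inj_on_subset)
  also have "\<dots> = (\<Sum>\<beta>\<in>{\<beta>. \<beta> \<le> \<alpha>(i := \<alpha> i + k)}. Y \<beta>)"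
  proof (rule sum.mono_neutral_left)
    show "finite {\<beta>. \<beta> \<le> \<alpha>(i := \<alpha> i + k)}"
      by (rule finite_le_multi_idx[OF multi_idx_upd[OF \<alpha> i]])
    show "?shift ` {\<delta>. \<delta> \<le> \<alpha>} \<subseteq> {\<beta>. \<beta> \<le> \<alpha>(i := \<alpha> i + k)}"
      using jk by (auto simp: le_fun_def add_mono)
    show "\<forall>\<beta>\<in>{\<beta>. \<beta> \<le> \<alpha>(i := \<alpha> i + k)} - ?shift ` {\<delta>. \<delta> \<le> \<alpha>}. Y \<beta> = 0"
    proof
      fix \<beta> assume \<beta>: "\<beta> \<in> {\<beta>. \<beta> \<le> \<alpha>(i := \<alpha> i + k)} - ?shift ` {\<delta>. \<delta> \<le> \<alpha>}"
      have "\<beta> \<in> ?shift ` {\<delta>. \<delta> \<le> \<alpha>}" if "\<not> (\<beta> i < j \<or> \<alpha> i + j < \<beta> i)"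
      proof -
        have "\<beta>(i := \<beta> i - j) \<le> \<alpha>" "?shift (\<beta>(i := \<beta> i - j)) = \<beta>"
          using \<beta> that by (auto simp: le_fun_def fun_eq_iff split: if_splits)
        then show ?thesis using image_eqI[of \<beta> ?shift "\<beta>(i := \<beta> i - j)"] by simp
      qed
      then show "Y \<beta> = 0" using \<beta> vanish by blast
    qed
  qed
  finally show ?thesis .
qed

lemma ser_mult_hasse_deriv_at:
  fixes f g :: "'v::comm_ring_1 ser"
  assumes \<alpha>: "\<alpha> \<in> multi_idx n" and i: "i < n" and j: "j \<le> k"
  defines "e \<equiv> \<alpha>(i := \<alpha> i + k)"
  shows "ser_mult (hasse_deriv i j f) (hasse_deriv i (k - j) g) \<alpha> =
    (\<Sum>\<beta>\<in>{\<beta>. \<beta> \<le> e}. of_nat ((\<beta> i choose j) * ((e i - \<beta> i) choose (k - j))) * (f \<beta> * g (\<lambda>l. e l - \<beta> l)))"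
    (is "_ = (\<Sum>\<beta>\<in>_. ?Y \<beta>)")
proof -
  have "ser_mult (hasse_deriv i j f) (hasse_deriv i (k - j) g) \<alpha> = (\<Sum>\<delta>\<in>{\<delta>. \<delta> \<le> \<alpha>}. ?Y (\<delta>(i := \<delta> i + j)))"
    unfolding ser_mult_def
  proof (rule sum.cong[OF refl])
    fix \<delta> assume "\<delta> \<in> {\<delta>. \<delta> \<le> \<alpha>}"
    then have "\<delta> i \<le> \<alpha> i" by (simp add: le_fun_def)
    then have "e i - (\<delta> i + j) = \<alpha> i - \<delta> i + (k - j)"
      "(\<lambda>l. \<alpha> l - \<delta> l)(i := \<alpha> i - \<delta> i + (k - j)) = (\<lambda>l. e l - (\<delta>(i := \<delta> i + j)) l)"
      using j by (auto simp: e_def fun_eq_iff)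
    then show "hasse_deriv i j f \<delta> * hasse_deriv i (k - j) g (\<lambda>l. \<alpha> l - \<delta> l) = ?Y (\<delta>(i := \<delta> i + j))"
      by (simp add: hasse_deriv_def mult_ac)
  qed
  also have "\<dots> = (\<Sum>\<beta>\<in>{\<beta>. \<beta> \<le> e}. ?Y \<beta>)"
  proof -
    have "?Y \<beta> = 0" if "\<beta> \<le> e" "\<beta> i < j \<or> \<alpha> i + j < \<beta> i" for \<beta>
    proof -
      have "\<beta> i choose j = 0 \<or> (e i - \<beta> i) choose (k - j) = 0"
        using that j by (auto simp: e_def binomial_eq_0 le_fun_def split: if_splits)
      then show ?thesis by (auto simp: binomial_eq_0)
    qed
    then show ?thesis by (rule sum_le_shift_idx[OF \<alpha> i j, folded e_def])
  qed
  finally show ?thesis .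
qed

lemma hasse_deriv_mult_at:
  fixes f g :: "'v::comm_ring_1 ser"
  assumes \<alpha>: "\<alpha> \<in> multi_idx n" and i: "i < n"
  shows "hasse_deriv i k (ser_mult f g) \<alpha> = (\<Sum>j\<le>k. ser_mult (hasse_deriv i j f) (hasse_deriv i (k - j) g) \<alpha>)"
proof -
  define e where "e = \<alpha>(i := \<alpha> i + k)"
  let ?fg = "\<lambda>\<beta>. f \<beta> * g (\<lambda>l. e l - \<beta> l)"
  have vandermonde_at:
    "(\<Sum>j\<le>k. of_nat ((\<beta> i choose j) * ((e i - \<beta> i) choose (k - j))) * ?fg \<beta>) = of_nat (e i choose k) * ?fg \<beta>"
    if "\<beta> \<le> e" for \<beta>
  proof -
    have "(\<Sum>j\<le>k. of_nat ((\<beta> i choose j) * ((e i - \<beta> i) choose (k - j))) * ?fg \<beta>) =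
        of_nat (\<Sum>j\<le>k. (\<beta> i choose j) * ((e i - \<beta> i) choose (k - j))) * ?fg \<beta>"
      unfolding of_nat_sum sum_distrib_right ..
    also have "(\<Sum>j\<le>k. (\<beta> i choose j) * ((e i - \<beta> i) choose (k - j))) = e i choose k"
      using vandermonde[of "\<beta> i" "e i - \<beta> i" k] that by (simp add: le_fun_def)
    finally show ?thesis .
  qed
  have "(\<Sum>j\<le>k. ser_mult (hasse_deriv i j f) (hasse_deriv i (k - j) g) \<alpha>) =
      (\<Sum>j\<le>k. \<Sum>\<beta>\<in>{\<beta>. \<beta> \<le> e}. of_nat ((\<beta> i choose j) * ((e i - \<beta> i) choose (k - j))) * ?fg \<beta>)"
    using ser_mult_hasse_deriv_at[OF \<alpha> i] unfolding e_def by (intro sum.cong) auto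
  also have "\<dots> = (\<Sum>\<beta>\<in>{\<beta>. \<beta> \<le> e}. \<Sum>j\<le>k. of_nat ((\<beta> i choose j) * ((e i - \<beta> i) choose (k - j))) * ?fg \<beta>)"
    by (rule sum.swap)
  also have "\<dots> = (\<Sum>\<beta>\<in>{\<beta>. \<beta> \<le> e}. of_nat (e i choose k) * ?fg \<beta>)"
    using vandermonde_at by (intro sum.cong) auto
  also have "\<dots> = hasse_deriv i k (ser_mult f g) \<alpha>"
    by (simp add: ser_mult_def sum_distrib_left hasse_deriv_def e_def)
  finally show ?thesis by simp
qed

section \<open>Differential operators\<close>

definition zero_op :: "'v::zero ser \<Rightarrow> 'v ser" where
  "zero_op = (\<lambda>f. ser_zero)"

definition id_op :: "'v::zero ser set \<Rightarrow> 'v ser \<Rightarrow> 'v ser" where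
  "id_op Rc = (\<lambda>f. if f \<in> Rc then f else ser_zero)"

definition op_add :: "('v::plus ser \<Rightarrow> 'v ser) \<Rightarrow> ('v ser \<Rightarrow> 'v ser) \<Rightarrow> 'v ser \<Rightarrow> 'v ser" where
  "op_add \<delta> \<delta>' = (\<lambda>f. ser_add (\<delta> f) (\<delta>' f))"

definition op_sum :: "('a \<Rightarrow> 'v::comm_monoid_add ser \<Rightarrow> 'v ser) \<Rightarrow> 'a set \<Rightarrow> 'v ser \<Rightarrow> 'v ser" where
  "op_sum F S = (\<lambda>f \<alpha>. \<Sum>j\<in>S. F j f \<alpha>)"

definition op_commutator :: "'v::comm_ring_1 ser set \<Rightarrow> ('v ser \<Rightarrow> 'v ser) \<Rightarrow> 'v ser \<Rightarrow> 'v ser \<Rightarrow> 'v ser" where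
  "op_commutator Rc \<delta> r = (\<lambda>f. if f \<in> Rc then ser_diff (\<delta> (ser_mult r f)) (ser_mult r (\<delta> f)) else ser_zero)"

definition hasse_op :: "'v::comm_ring_1 ser set \<Rightarrow> nat \<Rightarrow> nat \<Rightarrow> 'v ser \<Rightarrow> 'v ser" where
  "hasse_op Rc i k = (\<lambda>f. if f \<in> Rc then hasse_deriv i k f else ser_zero)"

lemma op_sum_empty: "op_sum F {} = zero_op"
  by (simp add: op_sum_def zero_op_def ser_zero_def)

lemma op_sum_insert: "finite S \<Longrightarrow> j \<notin> S \<Longrightarrow> op_sum F (insert j S) = op_add (F j) (op_sum F S)"
  by (simp add: op_sum_def op_add_def ser_add_def)

lemma hasse_op_0: "hasse_op Rc i 0 = id_op Rc"
  by (simp add: hasse_op_def id_op_def hasse_deriv_def fun_eq_iff)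

lemma diff_op_Suc_iff:
  "diff_op Rc (Suc k) \<delta> \<longleftrightarrow> V_linear_op Rc \<delta> \<and> (\<forall>r\<in>Rc. diff_op Rc k (op_commutator Rc \<delta> r))"
  by (simp add: op_commutator_def)

lemma diff_op_0_iff:
  "diff_op Rc 0 \<delta> \<longleftrightarrow> V_linear_op Rc \<delta> \<and> (\<forall>r\<in>Rc. \<forall>f\<in>Rc. \<delta> (ser_mult r f) = ser_mult r (\<delta> f))"
  by simp

declare diff_op.simps [simp del]

lemma diff_op_V_linear_op: "diff_op Rc k \<delta> \<Longrightarrow> V_linear_op Rc \<delta>"
  by (cases k) (auto simp: diff_op_0_iff diff_op_Suc_iff)

lemma diff_op_in_diff_ops: "diff_op Rc k \<delta> \<Longrightarrow> \<delta> \<in> diff_ops Rc"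
  unfolding diff_ops_def by blast

locale ser_ring =
  fixes n :: nat and Rc :: "'v::comm_ring_1 ser set"
  assumes carrier_cases: "Rc = ps_carrier n \<or> Rc = poly_carrier n"
begin

lemma carrier_iff: "f \<in> Rc \<longleftrightarrow> f \<in> ps_carrier n \<and> (Rc = poly_carrier n \<longrightarrow> finite {\<alpha>. f \<alpha> \<noteq> 0})"
  using carrier_cases by (auto simp: poly_carrier_def)

lemma carrier_ps_carrier: "f \<in> Rc \<Longrightarrow> f \<in> ps_carrier n"
  by (simp add: carrier_iff)

lemma carrier_by_support:
  assumes "f \<in> Rc" "g \<in> Rc" "\<And>\<alpha>. h \<alpha> \<noteq> 0 \<Longrightarrow> f \<alpha> \<noteq> 0 \<or> g \<alpha> \<noteq> 0"
  shows "h \<in> Rc"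
proof -
  have "{\<alpha>. h \<alpha> \<noteq> 0} \<subseteq> {\<alpha>. f \<alpha> \<noteq> 0} \<union> {\<alpha>. g \<alpha> \<noteq> 0}" using assms(3) by blast
  then have "finite {\<alpha>. f \<alpha> \<noteq> 0} \<Longrightarrow> finite {\<alpha>. g \<alpha> \<noteq> 0} \<Longrightarrow> finite {\<alpha>. h \<alpha> \<noteq> 0}"
    by (meson finite_UnI finite_subset)
  moreover have "h \<in> ps_carrier n"
    using assms by (auto simp: carrier_iff ps_carrier_def)
  ultimately show ?thesis using assms(1,2) by (simp add: carrier_iff)
qed

lemma ser_zero_in: "ser_zero \<in> Rc"
  by (simp add: carrier_iff ps_carrier_def ser_zero_def)

lemma ser_const_in: "ser_const c \<in> Rc"
proof -
  have "{\<alpha>. ser_const c \<alpha> \<noteq> 0} \<subseteq> {\<lambda>i. 0}" by (auto simp: ser_const_def)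
  then have "finite {\<alpha>. ser_const c \<alpha> \<noteq> 0}" by (rule finite_subset) simp
  moreover have "ser_const c \<in> ps_carrier n"
    by (simp add: ps_carrier_def ser_const_def zero_in_multi_idx)
  ultimately show ?thesis by (simp add: carrier_iff)
qed

lemma ser_add_in: "f \<in> Rc \<Longrightarrow> g \<in> Rc \<Longrightarrow> ser_add f g \<in> Rc"
  by (rule carrier_by_support[of f g]) (auto simp: ser_add_def)

lemma ser_diff_in: "f \<in> Rc \<Longrightarrow> g \<in> Rc \<Longrightarrow> ser_diff f g \<in> Rc"
  by (rule carrier_by_support[of f g]) (auto simp: ser_diff_def)

lemma ser_scale_in: "f \<in> Rc \<Longrightarrow> ser_scale c f \<in> Rc"
  by (rule carrier_by_support[of f f]) (auto simp: ser_scale_def)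

lemma ser_sum_in:
  assumes "finite S" "\<And>j. j \<in> S \<Longrightarrow> F j \<in> Rc"
  shows "(\<lambda>\<alpha>. \<Sum>j\<in>S. F j \<alpha>) \<in> Rc"
  using assms
proof (induction S rule: finite_induct)
  case empty
  then show ?case using ser_zero_in by (simp add: ser_zero_def)
next
  case (insert j S)
  then have "F j \<in> Rc" "(\<lambda>\<alpha>. \<Sum>j\<in>S. F j \<alpha>) \<in> Rc" by auto
  then show ?case by (rule carrier_by_support) (use insert.hyps in auto)
qed

lemma ser_mult_in: "f \<in> Rc \<Longrightarrow> g \<in> Rc \<Longrightarrow> ser_mult f g \<in> Rc"
  by (simp add: carrier_iff ser_mult_ps_carrier finite_support_ser_mult)

lemma hasse_deriv_in: "i < n \<Longrightarrow> f \<in> Rc \<Longrightarrow> hasse_deriv i k f \<in> Rc"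
  by (simp add: carrier_iff hasse_deriv_ps_carrier finite_support_hasse_deriv)

lemma hasse_op_in: "i < n \<Longrightarrow> hasse_op Rc i k f \<in> Rc"
  by (simp add: hasse_op_def hasse_deriv_in ser_zero_in)

lemma ser_mult_const_eq_scale: "f \<in> Rc \<Longrightarrow> ser_mult (ser_const c) f = ser_scale c f"
  by (rule ser_mult_const[OF carrier_ps_carrier])

lemma ser_dvd_coeffs:
  assumes f: "f \<in> Rc" and dvd: "\<forall>\<alpha>\<in>multi_idx n. c dvd f \<alpha>"
  shows "\<exists>g\<in>Rc. f = ser_mult (ser_const c) g"
proof -
  define g where "g \<alpha> = (if f \<alpha> = 0 then 0 else SOME q. f \<alpha> = c * q)" for \<alpha>
  have fg: "f \<alpha> = c * g \<alpha>" if "\<alpha> \<in> multi_idx n" for \<alpha>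
    using dvd that someI_ex[of "\<lambda>q. f \<alpha> = c * q"] by (auto simp: g_def dvd_def)
  have gR: "g \<in> Rc" by (rule carrier_by_support[OF f f]) (simp add: g_def split: if_splits)
  have "f = ser_mult (ser_const c) g"
    using fg by (auto intro!: ps_carrier_eqI carrier_ps_carrier f ser_mult_in ser_const_in gR
        simp: ser_mult_const_at)
  then show ?thesis using gR by blast
qed

lemma V_linear_opI:
  assumes "\<And>f. f \<notin> Rc \<Longrightarrow> \<delta> f = ser_zero" and "\<And>f. f \<in> Rc \<Longrightarrow> \<delta> f \<in> Rc"
    and "\<And>f g. f \<in> Rc \<Longrightarrow> g \<in> Rc \<Longrightarrow> \<delta> (ser_add f g) = ser_add (\<delta> f) (\<delta> g)"
    and "\<And>f c. f \<in> Rc \<Longrightarrow> \<delta> (ser_scale c f) = ser_scale c (\<delta> f)"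
  shows "V_linear_op Rc \<delta>"
  unfolding V_linear_op_def extensional_op_def
  using assms by (simp add: ser_mult_const_eq_scale)

lemma V_linear_op_outside: "V_linear_op Rc \<delta> \<Longrightarrow> f \<notin> Rc \<Longrightarrow> \<delta> f = ser_zero"
  unfolding V_linear_op_def extensional_op_def by blast

lemma V_linear_op_in: "V_linear_op Rc \<delta> \<Longrightarrow> \<delta> f \<in> Rc"
  unfolding V_linear_op_def extensional_op_def using ser_zero_in by metis

lemma V_linear_op_ser_add:
  "V_linear_op Rc \<delta> \<Longrightarrow> f \<in> Rc \<Longrightarrow> g \<in> Rc \<Longrightarrow> \<delta> (ser_add f g) = ser_add (\<delta> f) (\<delta> g)"
  unfolding V_linear_op_def by blast

lemma V_linear_op_ser_scale:
  assumes "V_linear_op Rc \<delta>" "f \<in> Rc"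
  shows "\<delta> (ser_scale c f) = ser_scale c (\<delta> f)"
proof -
  have "\<delta> (ser_mult (ser_const c) f) = ser_mult (ser_const c) (\<delta> f)"
    using assms unfolding V_linear_op_def by blast
  then show ?thesis using assms by (simp add: ser_mult_const_eq_scale V_linear_op_in)
qed

lemma V_linear_zero_op: "V_linear_op Rc zero_op"
  by (rule V_linear_opI) (simp_all add: zero_op_def ser_zero_in, simp_all add: ser_zero_def ser_add_def ser_scale_def)

lemma V_linear_id_op: "V_linear_op Rc (id_op Rc)"
  by (rule V_linear_opI) (simp_all add: id_op_def ser_add_in ser_scale_in)

lemma V_linear_op_add:
  assumes "V_linear_op Rc \<delta>" "V_linear_op Rc \<delta>'"
  shows "V_linear_op Rc (op_add \<delta> \<delta>')"
proof (rule V_linear_opI)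
  show "op_add \<delta> \<delta>' f = ser_zero" if "f \<notin> Rc" for f
    using that assms by (simp add: op_add_def V_linear_op_outside ser_add_def ser_zero_def)
  show "op_add \<delta> \<delta>' (ser_add f g) = ser_add (op_add \<delta> \<delta>' f) (op_add \<delta> \<delta>' g)" if "f \<in> Rc" "g \<in> Rc" for f g
    using that assms by (simp add: op_add_def V_linear_op_ser_add) (simp add: ser_add_def algebra_simps)
  show "op_add \<delta> \<delta>' (ser_scale c f) = ser_scale c (op_add \<delta> \<delta>' f)" if "f \<in> Rc" for f c
    using that assms by (simp add: op_add_def V_linear_op_ser_scale) (simp add: ser_add_def ser_scale_def algebra_simps)
qed (simp add: op_add_def ser_add_in V_linear_op_in assms)

lemma V_linear_mult_op_comp:
  assumes a: "a \<in> Rc" and \<delta>: "V_linear_op Rc \<delta>"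
  shows "V_linear_op Rc (mult_op Rc a \<circ> \<delta>)"
proof (rule V_linear_opI)
  show "(mult_op Rc a \<circ> \<delta>) f = ser_zero" if "f \<notin> Rc" for f
    using that \<delta> by (simp add: mult_op_def V_linear_op_outside ser_zero_in ser_mult_zero_right)
  show "(mult_op Rc a \<circ> \<delta>) (ser_add f g) = ser_add ((mult_op Rc a \<circ> \<delta>) f) ((mult_op Rc a \<circ> \<delta>) g)"
    if "f \<in> Rc" "g \<in> Rc" for f g
    using that \<delta> by (simp add: mult_op_def V_linear_op_in V_linear_op_ser_add ser_add_in ser_mult_add_right)
  show "(mult_op Rc a \<circ> \<delta>) (ser_scale c f) = ser_scale c ((mult_op Rc a \<circ> \<delta>) f)" if "f \<in> Rc" for f c
    using that \<delta> by (simp add: mult_op_def V_linear_op_in V_linear_op_ser_scale ser_scale_in ser_mult_scale_right)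
qed (simp add: mult_op_def V_linear_op_in \<delta> ser_mult_in a)

lemma V_linear_hasse_op: "i < n \<Longrightarrow> V_linear_op Rc (hasse_op Rc i k)"
  by (rule V_linear_opI)
    (simp_all add: hasse_op_def hasse_deriv_in ser_add_in ser_scale_in hasse_deriv_add hasse_deriv_scale)

lemma diff_op_zero_op: "diff_op Rc k zero_op"
proof (induction k)
  case 0
  then show ?case by (simp add: diff_op_0_iff V_linear_zero_op) (simp add: zero_op_def ser_mult_zero_right)
next
  case (Suc k)
  have "op_commutator Rc zero_op r = zero_op" for r :: "'v ser"
    by (simp add: op_commutator_def zero_op_def ser_mult_zero_right fun_eq_iff)
       (simp add: ser_diff_def ser_zero_def)
  then show ?case using Suc V_linear_zero_op by (simp add: diff_op_Suc_iff)
qed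

lemma diff_op_Suc: "diff_op Rc k \<delta> \<Longrightarrow> diff_op Rc (Suc k) \<delta>"
proof (induction k arbitrary: \<delta>)
  case 0
  then have "op_commutator Rc \<delta> r = zero_op" if "r \<in> Rc" for r
    using that by (auto simp: diff_op_0_iff op_commutator_def zero_op_def ser_diff_def ser_zero_def fun_eq_iff)
  then show ?case using 0 diff_op_zero_op by (simp add: diff_op_Suc_iff diff_op_V_linear_op)
next
  case (Suc k)
  then show ?case by (simp add: diff_op_Suc_iff)
qed

lemma diff_op_mono: "diff_op Rc k \<delta> \<Longrightarrow> k \<le> l \<Longrightarrow> diff_op Rc l \<delta>"
  by (induction l) (auto simp: le_Suc_eq intro: diff_op_Suc)

lemma op_commutator_op_add:
  "op_commutator Rc (op_add \<delta> \<delta>') r = op_add (op_commutator Rc \<delta> r) (op_commutator Rc \<delta>' r)"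
  by (auto simp: op_commutator_def op_add_def ser_mult_add_right fun_eq_iff)
    (simp_all add: ser_add_def ser_diff_def ser_zero_def)

lemma diff_op_op_add: "diff_op Rc k \<delta> \<Longrightarrow> diff_op Rc k \<delta>' \<Longrightarrow> diff_op Rc k (op_add \<delta> \<delta>')"
proof (induction k arbitrary: \<delta> \<delta>')
  case 0
  then show ?case
    by (simp add: diff_op_0_iff V_linear_op_add) (simp add: op_add_def ser_mult_add_right)
next
  case (Suc k)
  then show ?case by (simp add: diff_op_Suc_iff V_linear_op_add op_commutator_op_add)
qed

lemma diff_op_op_sum:
  assumes "finite S" "\<And>j. j \<in> S \<Longrightarrow> diff_op Rc k (F j)"
  shows "diff_op Rc k (op_sum F S)"
  using assms by (induction S rule: finite_induct)
    (simp_all add: op_sum_empty op_sum_insert diff_op_zero_op diff_op_op_add)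

lemma op_commutator_mult_op_comp:
  assumes a: "a \<in> Rc" and r: "r \<in> Rc" and \<delta>: "V_linear_op Rc \<delta>"
  shows "op_commutator Rc (mult_op Rc a \<circ> \<delta>) r = mult_op Rc a \<circ> op_commutator Rc \<delta> r"
proof
  fix f show "op_commutator Rc (mult_op Rc a \<circ> \<delta>) r f = (mult_op Rc a \<circ> op_commutator Rc \<delta> r) f"
  proof (cases "f \<in> Rc")
    case True
    have "ser_mult a (ser_mult r (\<delta> f)) = ser_mult r (ser_mult a (\<delta> f))"
      using ser_mult_left_commute[OF carrier_ps_carrier[OF a] carrier_ps_carrier[OF r]
          carrier_ps_carrier[OF V_linear_op_in[OF \<delta>]]] .
    then show ?thesis
      using True a r \<delta>
      by (simp add: op_commutator_def mult_op_def V_linear_op_in ser_mult_in ser_diff_in ser_mult_diff_right)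
  next
    case False
    then show ?thesis by (simp add: op_commutator_def mult_op_def ser_zero_in ser_mult_zero_right)
  qed
qed

lemma diff_op_mult_op_comp: "a \<in> Rc \<Longrightarrow> diff_op Rc k \<delta> \<Longrightarrow> diff_op Rc k (mult_op Rc a \<circ> \<delta>)"
proof (induction k arbitrary: \<delta>)
  case 0
  have \<delta>: "V_linear_op Rc \<delta>" using 0(2) by (rule diff_op_V_linear_op)
  have "ser_mult a (ser_mult r (\<delta> f)) = ser_mult r (ser_mult a (\<delta> f))" if "r \<in> Rc" for r f
    using ser_mult_left_commute[OF carrier_ps_carrier[OF 0(1)] carrier_ps_carrier[OF that]
        carrier_ps_carrier[OF V_linear_op_in[OF \<delta>]]] .
  moreover have "V_linear_op Rc (mult_op Rc a \<circ> \<delta>)" using 0(1) \<delta> by (rule V_linear_mult_op_comp)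
  ultimately show ?case
    using 0 \<delta> by (simp add: diff_op_0_iff mult_op_def comp_def V_linear_op_in ser_mult_in)
next
  case (Suc k)
  have \<delta>: "V_linear_op Rc \<delta>" and comm: "\<forall>r\<in>Rc. diff_op Rc k (op_commutator Rc \<delta> r)"
    using Suc.prems(2) by (simp_all add: diff_op_Suc_iff)
  have "diff_op Rc k (op_commutator Rc (mult_op Rc a \<circ> \<delta>) r)" if "r \<in> Rc" for r
    unfolding op_commutator_mult_op_comp[OF Suc.prems(1) that \<delta>]
    using Suc.IH[OF Suc.prems(1)] comm that by blast
  then show ?case
    unfolding diff_op_Suc_iff using V_linear_mult_op_comp[OF Suc.prems(1) \<delta>] by blast
qed

lemma diff_op_id_op: "diff_op Rc 0 (id_op Rc)"
  by (simp add: diff_op_0_iff V_linear_id_op) (simp add: id_op_def ser_mult_in)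

lemma mult_op_eq_comp_id_op: "mult_op Rc a = mult_op Rc a \<circ> id_op Rc"
  by (auto simp: mult_op_def id_op_def fun_eq_iff ser_zero_in ser_mult_zero_right)

lemma diff_op_mult_op: "a \<in> Rc \<Longrightarrow> diff_op Rc 0 (mult_op Rc a)"
  by (subst mult_op_eq_comp_id_op) (rule diff_op_mult_op_comp[OF _ diff_op_id_op])

lemma hasse_op_mult_op:
  assumes i: "i < n" and r: "r \<in> Rc"
  shows "hasse_op Rc i k \<circ> mult_op Rc r =
    op_sum (\<lambda>j. mult_op Rc (hasse_op Rc i j r) \<circ> hasse_op Rc i (k - j)) {..k}"
proof
  fix f
  show "(hasse_op Rc i k \<circ> mult_op Rc r) f =
      op_sum (\<lambda>j. mult_op Rc (hasse_op Rc i j r) \<circ> hasse_op Rc i (k - j)) {..k} f"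
  proof (cases "f \<in> Rc")
    case True
    have "(hasse_op Rc i k \<circ> mult_op Rc r) f = hasse_deriv i k (ser_mult r f)"
      using True r by (simp add: hasse_op_def mult_op_def ser_mult_in)
    also have "\<dots> = (\<lambda>\<alpha>. \<Sum>j\<le>k. ser_mult (hasse_deriv i j r) (hasse_deriv i (k - j) f) \<alpha>)"
    proof (rule ps_carrier_eqI)
      show "hasse_deriv i k (ser_mult r f) \<in> ps_carrier n"
        using carrier_ps_carrier[OF hasse_deriv_in[OF i ser_mult_in[OF r True]]] .
      have "(\<lambda>\<alpha>. \<Sum>j\<le>k. ser_mult (hasse_deriv i j r) (hasse_deriv i (k - j) f) \<alpha>) \<in> Rc"
        using i r True by (simp add: ser_sum_in ser_mult_in hasse_deriv_in)
      then show "(\<lambda>\<alpha>. \<Sum>j\<le>k. ser_mult (hasse_deriv i j r) (hasse_deriv i (k - j) f) \<alpha>) \<in> ps_carrier n"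
        by (rule carrier_ps_carrier)
    qed (rule hasse_deriv_mult_at[OF _ i])
    also have "\<dots> = op_sum (\<lambda>j. mult_op Rc (hasse_op Rc i j r) \<circ> hasse_op Rc i (k - j)) {..k} f"
      using True r i by (simp add: op_sum_def hasse_op_def mult_op_def hasse_deriv_in)
    finally show ?thesis .
  next
    case False
    then show ?thesis
      by (simp add: hasse_op_def mult_op_def op_sum_def ser_zero_in ser_mult_zero_right hasse_deriv_zero)
        (simp add: ser_zero_def)
  qed
qed

lemma op_commutator_hasse_op:
  assumes i: "i < n" and r: "r \<in> Rc"
  shows "op_commutator Rc (hasse_op Rc i (Suc k)) r =
    op_sum (\<lambda>j. mult_op Rc (hasse_op Rc i j r) \<circ> hasse_op Rc i (Suc k - j)) {1..Suc k}"
proof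
  fix f
  let ?F = "\<lambda>j. mult_op Rc (hasse_op Rc i j r) \<circ> hasse_op Rc i (Suc k - j)"
  show "op_commutator Rc (hasse_op Rc i (Suc k)) r f = op_sum ?F {1..Suc k} f"
  proof (cases "f \<in> Rc")
    case True
    have "{..Suc k} = insert 0 {1..Suc k}" by auto
    then have "hasse_op Rc i (Suc k) (ser_mult r f) = ser_add (?F 0 f) (op_sum ?F {1..Suc k} f)"
      using fun_cong[OF hasse_op_mult_op[OF i r, of "Suc k"], of f] True
      by (simp add: op_sum_insert op_add_def mult_op_def)
    moreover have "?F 0 f = ser_mult r (hasse_op Rc i (Suc k) f)"
      using r hasse_op_in[OF i] by (simp add: hasse_op_0 id_op_def mult_op_def)
    ultimately show ?thesis
      using True by (simp add: op_commutator_def ser_diff_def ser_add_def)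
  next
    case False
    then show ?thesis
      by (simp add: op_commutator_def op_sum_def hasse_op_def mult_op_def ser_zero_in ser_mult_zero_right)
        (simp add: ser_zero_def)
  qed
qed

lemma diff_op_hasse_op:
  assumes i: "i < n"
  shows "diff_op Rc k (hasse_op Rc i k)"
proof (induction k rule: less_induct)
  case (less k)
  show ?case
  proof (cases k)
    case 0
    then show ?thesis using diff_op_id_op by (simp add: hasse_op_0)
  next
    case (Suc k')
    have "diff_op Rc k' (op_commutator Rc (hasse_op Rc i (Suc k')) r)" if r: "r \<in> Rc" for r
      unfolding op_commutator_hasse_op[OF i r]
    proof (rule diff_op_op_sum)
      fix j assume j: "j \<in> {1..Suc k'}"
      then have "diff_op Rc (Suc k' - j) (hasse_op Rc i (Suc k' - j))"
        using less.IH Suc by simp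
      then have "diff_op Rc (Suc k' - j) (mult_op Rc (hasse_op Rc i j r) \<circ> hasse_op Rc i (Suc k' - j))"
        by (rule diff_op_mult_op_comp[OF hasse_op_in[OF i]])
      then show "diff_op Rc k' (mult_op Rc (hasse_op Rc i j r) \<circ> hasse_op Rc i (Suc k' - j))"
        by (rule diff_op_mono) (use j in auto)
    qed simp
    then show ?thesis using Suc V_linear_hasse_op[OF i] by (simp add: diff_op_Suc_iff)
  qed
qed

end

section \<open>Annihilators\<close>

locale ser_D_module = ser_ring n Rc
  for n :: nat and Rc :: "'v::comm_ring_1 ser set" +
  fixes act :: "('v ser \<Rightarrow> 'v ser) \<Rightarrow> 'm::ab_group_add \<Rightarrow> 'm"
  assumes D_module: "D_module Rc act"
begin

lemma act_add: "\<delta> \<in> diff_ops Rc \<Longrightarrow> act \<delta> (m + m') = act \<delta> m + act \<delta> m'"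
  using D_module unfolding D_module_def by blast

lemma act_zero: "\<delta> \<in> diff_ops Rc \<Longrightarrow> act \<delta> 0 = 0"
  using act_add[of \<delta> 0 0] by simp

lemma act_op_add: "\<delta> \<in> diff_ops Rc \<Longrightarrow> \<delta>' \<in> diff_ops Rc \<Longrightarrow> act (op_add \<delta> \<delta>') m = act \<delta> m + act \<delta>' m"
  using D_module unfolding D_module_def op_add_def by blast

lemma act_comp: "\<delta> \<in> diff_ops Rc \<Longrightarrow> \<delta>' \<in> diff_ops Rc \<Longrightarrow> act (\<delta> \<circ> \<delta>') m = act \<delta> (act \<delta>' m)"
  using D_module unfolding D_module_def by blast

lemma act_id_op: "act (id_op Rc) m = m"
  using D_module unfolding D_module_def id_op_def by blast

lemma act_zero_op: "act zero_op m = 0"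
proof -
  have "op_add zero_op zero_op = (zero_op :: 'v ser \<Rightarrow> 'v ser)"
    by (simp add: op_add_def zero_op_def ser_add_def ser_zero_def)
  then show ?thesis
    using act_op_add[of zero_op zero_op m] diff_op_in_diff_ops[OF diff_op_zero_op] by simp
qed

lemma act_op_sum:
  assumes "finite S" "\<And>j. j \<in> S \<Longrightarrow> diff_op Rc k (F j)"
  shows "act (op_sum F S) m = (\<Sum>j\<in>S. act (F j) m)"
  using assms
proof (induction S rule: finite_induct)
  case empty
  then show ?case by (simp add: op_sum_empty act_zero_op)
next
  case (insert j S)
  then have "F j \<in> diff_ops Rc" "op_sum F S \<in> diff_ops Rc"
    by (auto intro: diff_op_in_diff_ops diff_op_op_sum)
  then show ?case using insert by (simp add: op_sum_insert act_op_add)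
qed

lemma mult_op_in_diff_ops: "a \<in> Rc \<Longrightarrow> mult_op Rc a \<in> diff_ops Rc"
  by (rule diff_op_in_diff_ops[OF diff_op_mult_op])

lemma hasse_op_in_diff_ops: "i < n \<Longrightarrow> hasse_op Rc i k \<in> diff_ops Rc"
  by (rule diff_op_in_diff_ops[OF diff_op_hasse_op])

lemma ann_R_carrier: "r \<in> ann_R Rc act \<Longrightarrow> r \<in> Rc"
  by (simp add: ann_R_def)

lemma ann_R_mult:
  assumes a: "a \<in> Rc" and r: "r \<in> ann_R Rc act"
  shows "ser_mult a r \<in> ann_R Rc act"
proof -
  have rR: "r \<in> Rc" using r by (rule ann_R_carrier)
  have "mult_op Rc (ser_mult a r) = mult_op Rc a \<circ> mult_op Rc r"
  proof
    fix f show "mult_op Rc (ser_mult a r) f = (mult_op Rc a \<circ> mult_op Rc r) f"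
      using ser_mult_assoc[OF carrier_ps_carrier[OF a] carrier_ps_carrier[OF rR], of f]
      by (cases "f \<in> Rc") (simp_all add: mult_op_def carrier_ps_carrier ser_mult_in rR ser_zero_in ser_mult_zero_right)
  qed
  then have "act (mult_op Rc (ser_mult a r)) m = act (mult_op Rc a) (act (mult_op Rc r) m)" for m
    using act_comp mult_op_in_diff_ops a rR by metis
  then show ?thesis
    using r a rR act_zero[OF mult_op_in_diff_ops[OF a]] by (simp add: ann_R_def ser_mult_in)
qed

lemma ann_R_add:
  assumes r: "r \<in> ann_R Rc act" and s: "s \<in> ann_R Rc act"
  shows "ser_add r s \<in> ann_R Rc act"
proof -
  have rR: "r \<in> Rc" and sR: "s \<in> Rc" using r s by (simp_all add: ann_R_carrier)
  have "mult_op Rc (ser_add r s) = op_add (mult_op Rc r) (mult_op Rc s)"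
    by (auto simp: mult_op_def op_add_def ser_mult_add_left fun_eq_iff)
      (simp add: ser_add_def ser_zero_def)
  then show ?thesis
    using r s rR sR mult_op_in_diff_ops by (simp add: ann_R_def act_op_add ser_add_in)
qed

lemma one_in_ann_R_imp_trivial:
  assumes "ser_const 1 \<in> ann_R Rc act"
  shows "(m::'m) = 0"
proof -
  have "mult_op Rc (ser_const 1) = id_op Rc"
    by (auto simp: mult_op_def id_op_def ser_mult_const_eq_scale ser_scale_def fun_eq_iff)
  then show ?thesis using assms act_id_op[of m] by (simp add: ann_R_def)
qed

lemma unit_const_in_ann_R_imp_one:
  assumes "u dvd 1" "ser_const u \<in> ann_R Rc act"
  shows "ser_const 1 \<in> ann_R Rc act"
proof -
  obtain u' where "1 = u * u'" using assms(1) by (rule dvdE)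
  have "ser_mult (ser_const u') (ser_const u) = ser_scale u' (ser_const u)"
    by (rule ser_mult_const_eq_scale[OF ser_const_in])
  also have "\<dots> = ser_const 1"
    using \<open>1 = u * u'\<close> by (simp add: ser_scale_def ser_const_def fun_eq_iff mult.commute)
  finally show ?thesis using ann_R_mult[OF ser_const_in assms(2)] by metis
qed

lemma ann_R_hasse_op:
  assumes i: "i < n" and r: "r \<in> ann_R Rc act"
  shows "hasse_op Rc i k r \<in> ann_R Rc act"
proof (induction k rule: less_induct)
  case (less k)
  have rR: "r \<in> Rc" using r by (rule ann_R_carrier)
  let ?F = "\<lambda>j. mult_op Rc (hasse_op Rc i j r) \<circ> hasse_op Rc i (k - j)"
  have F: "diff_op Rc k (?F j)" if "j \<in> {..k}" for j
    by (rule diff_op_mono[OF diff_op_mult_op_comp[OF hasse_op_in[OF i] diff_op_hasse_op[OF i]]]) simp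
  have lower: "act (?F j) m = 0" if "j < k" for j m
    using less.IH[OF that] act_comp[OF mult_op_in_diff_ops[OF hasse_op_in[OF i]] hasse_op_in_diff_ops[OF i]]
    by (simp add: ann_R_def)
  have "act (mult_op Rc (hasse_op Rc i k r)) m = 0" for m
  proof -
    have "0 = act (hasse_op Rc i k) (act (mult_op Rc r) m)"
      using r act_zero[OF hasse_op_in_diff_ops[OF i]] by (simp add: ann_R_def)
    also have "\<dots> = act (op_sum ?F {..k}) m"
      using act_comp[OF hasse_op_in_diff_ops[OF i] mult_op_in_diff_ops[OF rR]] hasse_op_mult_op[OF i rR]
      by simp
    also have "\<dots> = (\<Sum>j\<le>k. act (?F j) m)"
      using F by (intro act_op_sum) auto
    also have "\<dots> = act (?F k) m + (\<Sum>j<k. act (?F j) m)"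
      by (simp add: lessThan_Suc_atMost[symmetric] add.commute)
    also have "\<dots> = act (mult_op Rc (hasse_op Rc i k r)) m"
      using lower act_comp[OF mult_op_in_diff_ops[OF hasse_op_in[OF i]] diff_op_in_diff_ops[OF diff_op_id_op]]
      by (simp add: hasse_op_0 act_id_op)
    finally show ?thesis by simp
  qed
  then show ?case by (simp add: ann_R_def hasse_op_in[OF i])
qed

lemma ann_R_multi_hasse:
  assumes r: "r \<in> ann_R Rc act"
  shows "\<alpha> \<in> multi_idx m \<Longrightarrow> m \<le> n \<Longrightarrow> \<exists>s\<in>ann_R Rc act. \<forall>\<beta>\<in>multi_idx n.
    s \<beta> = of_nat (\<Prod>i<m. (\<beta> i + \<alpha> i) choose \<alpha> i) * r (\<lambda>i. \<beta> i + \<alpha> i)"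
proof (induction m arbitrary: \<alpha>)
  case 0
  then have "\<alpha> = (\<lambda>i. 0)" by (simp add: multi_idx_def fun_eq_iff)
  then show ?case using r by auto
next
  case (Suc m)
  have m: "m < n" using Suc.prems(2) by simp
  have "\<alpha>(m := 0) \<in> multi_idx m" using Suc.prems(1) by (auto simp: multi_idx_def)
  then obtain s where s: "s \<in> ann_R Rc act" and s_coeff: "\<forall>\<beta>\<in>multi_idx n.
      s \<beta> = of_nat (\<Prod>i<m. (\<beta> i + (\<alpha>(m := 0)) i) choose (\<alpha>(m := 0)) i) * r (\<lambda>i. \<beta> i + (\<alpha>(m := 0)) i)"
    using Suc.IH Suc.prems(2) by force
  show ?case
  proof (intro bexI ballI)
    show "hasse_op Rc m (\<alpha> m) s \<in> ann_R Rc act" by (rule ann_R_hasse_op[OF m s])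
    fix \<beta> assume \<beta>: "\<beta> \<in> multi_idx n"
    let ?\<beta>' = "\<beta>(m := \<beta> m + \<alpha> m)"
    have "(\<lambda>i. ?\<beta>' i + (\<alpha>(m := 0)) i) = (\<lambda>i. \<beta> i + \<alpha> i)" by auto
    moreover have "(\<Prod>i<m. (?\<beta>' i + (\<alpha>(m := 0)) i) choose (\<alpha>(m := 0)) i) = (\<Prod>i<m. (\<beta> i + \<alpha> i) choose \<alpha> i)"
      by (rule prod.cong) auto
    ultimately have "s ?\<beta>' = of_nat (\<Prod>i<m. (\<beta> i + \<alpha> i) choose \<alpha> i) * r (\<lambda>i. \<beta> i + \<alpha> i)"
      using s_coeff multi_idx_upd[OF \<beta> m] by simp
    then show "hasse_op Rc m (\<alpha> m) s \<beta> =
        of_nat (\<Prod>i<Suc m. (\<beta> i + \<alpha> i) choose \<alpha> i) * r (\<lambda>i. \<beta> i + \<alpha> i)"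
      using ann_R_carrier[OF s] by (simp add: hasse_op_def hasse_deriv_def mult_ac)
  qed
qed

lemma one_in_ann_R_ps:
  assumes ps: "Rc = ps_carrier n" and s: "s \<in> ann_R Rc act" and unit: "s (\<lambda>i. 0) dvd 1"
  shows "ser_const 1 \<in> ann_R Rc act"
proof -
  obtain c where "s (\<lambda>i. 0) * c = 1" using unit by (metis dvdE)
  then obtain v where v: "v \<in> ps_carrier n" "ser_mult s v = ser_const 1"
    using ps_carrier_inverse[OF carrier_ps_carrier[OF ann_R_carrier[OF s]]] by blast
  then show ?thesis using ann_R_mult[of v s] s ps by (simp add: ser_mult_commute)
qed

lemma ann_R_diff:
  assumes r: "r \<in> ann_R Rc act" and s: "s \<in> ann_R Rc act"
  shows "ser_diff r s \<in> ann_R Rc act"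
proof -
  have "ser_diff r s = ser_add r (ser_mult (ser_const (-1)) s)"
    using ann_R_carrier[OF s] by (simp add: ser_mult_const_eq_scale ser_diff_def ser_add_def ser_scale_def)
  then show ?thesis using ann_R_add[OF r ann_R_mult[OF ser_const_in s]] by simp
qed

lemma const_coeff_in_ann_R:
  assumes \<pi>: "ser_const \<pi> \<in> ann_R Rc act" and s: "s \<in> ann_R Rc act"
    and dvd: "\<forall>\<beta>\<in>multi_idx n. \<beta> \<noteq> (\<lambda>i. 0) \<longrightarrow> \<pi> dvd s \<beta>"
  shows "ser_const (s (\<lambda>i. 0)) \<in> ann_R Rc act"
proof -
  define s' where "s' = s((\<lambda>i. 0) := 0)"
  have "s' \<in> Rc"
    by (rule carrier_by_support[OF ann_R_carrier[OF s] ann_R_carrier[OF s]]) (simp add: s'_def split: if_splits)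
  moreover have "\<forall>\<beta>\<in>multi_idx n. \<pi> dvd s' \<beta>" using dvd by (simp add: s'_def)
  ultimately obtain g where g: "g \<in> Rc" "s' = ser_mult (ser_const \<pi>) g"
    using ser_dvd_coeffs by blast
  then have "s' \<in> ann_R Rc act" using ann_R_mult[OF g(1) \<pi>] by (simp add: ser_mult_commute)
  moreover have "ser_diff s s' = ser_const (s (\<lambda>i. 0))"
  proof
    fix \<beta> show "ser_diff s s' \<beta> = ser_const (s (\<lambda>i. 0)) \<beta>"
      by (cases "\<beta> = (\<lambda>i. 0)") (simp_all add: ser_diff_def ser_const_def s'_def)
  qed
  ultimately show ?thesis using ann_R_diff[OF s] by metis
qed

lemma one_in_ann_R_poly:
  assumes poly: "Rc = poly_carrier n" and units: "\<forall>a. \<not> \<pi> dvd a \<longrightarrow> a dvd 1"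
    and \<pi>: "ser_const \<pi> \<in> ann_R Rc act" and x: "x \<in> ann_R Rc act"
    and \<alpha>: "\<alpha> \<in> multi_idx n" "\<not> \<pi> dvd x \<alpha>"
  shows "ser_const 1 \<in> ann_R Rc act"
proof -
  define S where "S = {\<alpha> \<in> multi_idx n. \<not> \<pi> dvd x \<alpha>}"
  have "S \<subseteq> {\<alpha>. x \<alpha> \<noteq> 0}" by (auto simp: S_def)
  then have "finite (total_deg n ` S)"
    using ann_R_carrier[OF x] poly by (auto simp: poly_carrier_def intro: finite_subset)
  moreover have "\<alpha> \<in> S" using \<alpha> by (simp add: S_def)
  ultimately obtain \<alpha>0 where \<alpha>0: "\<alpha>0 \<in> S" "total_deg n \<alpha>0 = Max (total_deg n ` S)"
    by (metis Max_in empty_iff image_iff image_is_empty)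
  have max: "total_deg n \<beta> \<le> total_deg n \<alpha>0" if "\<beta> \<in> S" for \<beta>
    using \<alpha>0(2) \<open>finite (total_deg n ` S)\<close> that by simp
  have \<alpha>0_idx: "\<alpha>0 \<in> multi_idx n" and \<alpha>0_unit: "x \<alpha>0 dvd 1" using \<alpha>0(1) units by (auto simp: S_def)
  obtain s where s: "s \<in> ann_R Rc act" and s_coeff: "\<forall>\<beta>\<in>multi_idx n.
      s \<beta> = of_nat (\<Prod>i<n. (\<beta> i + \<alpha>0 i) choose \<alpha>0 i) * x (\<lambda>i. \<beta> i + \<alpha>0 i)"
    using ann_R_multi_hasse[OF x \<alpha>0_idx] by blast
  have "\<pi> dvd s \<beta>" if \<beta>: "\<beta> \<in> multi_idx n" "\<beta> \<noteq> (\<lambda>i. 0)" for \<beta>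
  proof -
    have "total_deg n \<alpha>0 < total_deg n (\<lambda>i. \<beta> i + \<alpha>0 i)"
      using total_deg_pos[OF \<beta>] by (simp add: total_deg_add)
    then have "(\<lambda>i. \<beta> i + \<alpha>0 i) \<notin> S" using max by fastforce
    then have "\<pi> dvd x (\<lambda>i. \<beta> i + \<alpha>0 i)" using multi_idx_add[OF \<beta>(1) \<alpha>0_idx] by (simp add: S_def)
    then show ?thesis using s_coeff \<beta>(1) by simp
  qed
  then have "ser_const (s (\<lambda>i. 0)) \<in> ann_R Rc act" using const_coeff_in_ann_R[OF \<pi> s] by blast
  moreover have "s (\<lambda>i. 0) = x \<alpha>0" using s_coeff zero_in_multi_idx by simp
  ultimately show ?thesis using unit_const_in_ann_R_imp_one \<alpha>0_unit by metis
qed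

lemma ann_R_coeff_dvd:
  assumes units: "\<forall>a. \<not> \<pi> dvd a \<longrightarrow> a dvd 1" and \<pi>: "ser_const \<pi> \<in> ann_R Rc act"
    and nontrivial: "\<exists>m::'m. m \<noteq> 0"
    and x: "x \<in> ann_R Rc act" and \<alpha>: "\<alpha> \<in> multi_idx n"
  shows "\<pi> dvd x \<alpha>"
proof (rule ccontr)
  assume not_dvd: "\<not> \<pi> dvd x \<alpha>"
  have "ser_const 1 \<in> ann_R Rc act"
    using carrier_cases
  proof
    assume ps: "Rc = ps_carrier n"
    obtain s where "s \<in> ann_R Rc act" "\<forall>\<beta>\<in>multi_idx n.
        s \<beta> = of_nat (\<Prod>i<n. (\<beta> i + \<alpha> i) choose \<alpha> i) * x (\<lambda>i. \<beta> i + \<alpha> i)"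
      using ann_R_multi_hasse[OF x \<alpha>] by blast
    moreover have "x \<alpha> dvd 1" using units not_dvd by blast
    ultimately show ?thesis using one_in_ann_R_ps[OF ps] zero_in_multi_idx by fastforce
  next
    assume "Rc = poly_carrier n"
    then show ?thesis using one_in_ann_R_poly units \<pi> x \<alpha> not_dvd by blast
  qed
  then show False using one_in_ann_R_imp_trivial nontrivial by blast
qed

lemma ann_R_eq_multiples:
  assumes "\<forall>a. \<not> \<pi> dvd a \<longrightarrow> a dvd 1" and \<pi>: "ser_const \<pi> \<in> ann_R Rc act"
    and "\<exists>m::'m. m \<noteq> 0"
  shows "ann_R Rc act = {ser_mult (ser_const \<pi>) r | r. r \<in> Rc}"
proof
  show "ann_R Rc act \<subseteq> {ser_mult (ser_const \<pi>) r | r. r \<in> Rc}"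
    using ser_dvd_coeffs ann_R_carrier ann_R_coeff_dvd[OF assms] by blast
  show "{ser_mult (ser_const \<pi>) r | r. r \<in> Rc} \<subseteq> ann_R Rc act"
    using ann_R_mult[OF _ \<pi>] by (auto simp: ser_mult_commute)
qed

end

lemma DVR_uniformizer_not_dvd_imp_unit:
  assumes "DVR_uniformizer \<pi>" "\<not> \<pi> dvd a"
  shows "a dvd 1"
proof -
  have "a \<noteq> 0" using assms(2) by auto
  then obtain u k where u: "u dvd 1" "a = u * \<pi> ^ k"
    using assms(1) unfolding DVR_uniformizer_def by blast
  with assms(2) have "k = 0" by (cases k) auto
  then show ?thesis using u by simp
qed

theorem lemma3p4:
  fixes \<pi> :: "'v::{idom, ring_char_0}"
    and p n :: nat
    and Rc :: "'v ser set"
    and act :: "('v ser \<Rightarrow> 'v ser) \<Rightarrow> 'm::ab_group_add \<Rightarrow> 'm"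
  assumes "DVR_uniformizer \<pi>"
    and "prime p" and "\<pi> dvd of_nat p"
    and "Rc = ps_carrier n \<or> Rc = poly_carrier n"
    and "D_module Rc act"
    and "\<exists>m::'m. m \<noteq> 0"
    and "\<forall>m. act (mult_op Rc (ser_const \<pi>)) m = 0"
  shows "ann_R Rc act = {ser_mult (ser_const \<pi>) r | r. r \<in> Rc}"
proof -
  interpret ser_D_module n Rc act
    using assms(4,5) by unfold_locales
  show ?thesis
  proof (rule ann_R_eq_multiples)
    show "\<forall>a. \<not> \<pi> dvd a \<longrightarrow> a dvd 1"
      using DVR_uniformizer_not_dvd_imp_unit[OF assms(1)] by blast
    show "ser_const \<pi> \<in> ann_R Rc act"
      using assms(7) ser_const_in by (simp add: ann_R_def)
  qed (rule assms(6))
qed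

end
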